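(* The ring $s'(\mathbb{Z}^d)$ (for any $d\ge1$) is a Hermite ring.
   Context: For $\mathbf{n}\in\mathbb{Z}^d$, $\|\mathbf{n}\|_1$ denotes the $1$-norm. $s'(\mathbb{Z}^d)$ is the set of all maps $\mathbf{a}:\mathbb{Z}^d\to\mathbb{C}$ for which there exist $M>0$ and $k\in\mathbb{N}$ with $|\mathbf{a}(\mathbf{n})|\le M(1+\|\mathbf{n}\|_1)^k$ for all $\mathbf{n}\in\mathbb{Z}^d$; it is a commutative unital ring under pointwise operations. For a commutative unital ring $R$, $U_N(R)$ denotes the set of $N$-tuples $(a_1,\dots,a_N)\in R^N$ for which there exist $b_1,\dots,b_N\in R$ with $b_1a_1+\cdots+b_Na_N=1$. $R$ is a Hermite ring if for every $N\in\mathbb{N}$ and every $(a_1,\dots,a_N)\in U_N(R)$ there exists a matrix $A\in R^{N\times N}$, invertible in $R^{N\times N}$, whose first column is $(a_1,\dots,a_N)^{\top}$, i.e. $A_{i1}=a_i$ for $i=1,\dots,N$. *)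

theory Defs
  imports Complex_Main "Jordan_Normal_Form.Matrix"
begin

definition unimodular :: "nat \<Rightarrow> 'a::comm_ring_1 vec \<Rightarrow> bool" where
  "unimodular N a \<longleftrightarrow> a \<in> carrier_vec N \<and>
     (\<exists>b \<in> carrier_vec N. (\<Sum>i<N. b $ i * a $ i) = 1)"

definition hermite_ring :: "'a::comm_ring_1 itself \<Rightarrow> bool" where
  "hermite_ring TYPE('a) \<longleftrightarrow>
     (\<forall>N. \<forall>a :: 'a vec. unimodular N a \<longrightarrow>
        (\<exists>A \<in> carrier_mat N N. invertible_mat A \<and> col A 0 = a))"

text \<open>Z^d is modelled as ('d => int) for a finite (nonempty) index type 'd, d = CARD('d) \<ge> 1.\<close>
definition norm1 :: "('d::finite \<Rightarrow> int) \<Rightarrow> int" where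
  "norm1 n = (\<Sum>i\<in>UNIV. \<bar>n i\<bar>)"

definition slow_growth :: "(('d::finite \<Rightarrow> int) \<Rightarrow> complex) set" where
  "slow_growth = {a. \<exists>M>0. \<exists>k::nat. \<forall>n. cmod (a n) \<le> M * (1 + real_of_int (norm1 n)) ^ k}"

typedef (overloaded) 'd sprime = "slow_growth :: (('d::finite \<Rightarrow> int) \<Rightarrow> complex) set"
  morphisms sp_fun Abs_sprime
proof
  show "(\<lambda>_. 0) \<in> slow_growth" unfolding slow_growth_def
    by (rule CollectI, rule exI[of _ 1]) (auto intro!: exI[of _ 0])
qed

setup_lifting type_definition_sprime

lemma norm1_nonneg: "0 \<le> norm1 n"
  unfolding norm1_def by (simp add: sum_nonneg)

lemma base_ge1: "1 \<le> 1 + real_of_int (norm1 n)"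
  using norm1_nonneg[of n] by simp

lemma const_in: "(\<lambda>_. c) \<in> slow_growth"
  unfolding slow_growth_def
  by (rule CollectI, rule exI[of _ "cmod c + 1"]) (auto intro!: exI[of _ 0] add_nonneg_pos)

lemma pow_mono_base:
  fixes x :: real assumes "1 \<le> x" "k \<le> m" shows "x ^ k \<le> x ^ m"
  using assms by (simp add: power_increasing)

lemma add_in:
  assumes "a \<in> slow_growth" "b \<in> slow_growth"
  shows "(\<lambda>n. a n + b n) \<in> slow_growth"
proof -
  from assms obtain M1 k1 M2 k2 where M1: "M1 > 0" and b1: "\<forall>n. cmod (a n) \<le> M1 * (1 + real_of_int (norm1 n)) ^ k1"
    and M2: "M2 > 0" and b2: "\<forall>n. cmod (b n) \<le> M2 * (1 + real_of_int (norm1 n)) ^ k2"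
    unfolding slow_growth_def by blast
  have "cmod (a n + b n) \<le> (M1 + M2) * (1 + real_of_int (norm1 n)) ^ (k1 + k2)" for n
  proof -
    let ?x = "1 + real_of_int (norm1 n)"
    have x: "1 \<le> ?x" by (rule base_ge1)
    have "cmod (a n + b n) \<le> cmod (a n) + cmod (b n)" by (rule norm_triangle_ineq)
    also have "\<dots> \<le> M1 * ?x ^ k1 + M2 * ?x ^ k2" using b1 b2 by (meson add_mono)
    also have "\<dots> \<le> M1 * ?x ^ (k1+k2) + M2 * ?x ^ (k1+k2)"
      using M1 M2 x by (intro add_mono mult_left_mono pow_mono_base) auto
    finally show ?thesis by (simp add: distrib_right)
  qed
  thus ?thesis unfolding slow_growth_def using M1 M2
    by (intro CollectI exI[of _ "M1+M2"]) auto
qed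

lemma mult_in:
  assumes "a \<in> slow_growth" "b \<in> slow_growth"
  shows "(\<lambda>n. a n * b n) \<in> slow_growth"
proof -
  from assms obtain M1 k1 M2 k2 where M1: "M1 > 0" and b1: "\<forall>n. cmod (a n) \<le> M1 * (1 + real_of_int (norm1 n)) ^ k1"
    and M2: "M2 > 0" and b2: "\<forall>n. cmod (b n) \<le> M2 * (1 + real_of_int (norm1 n)) ^ k2"
    unfolding slow_growth_def by blast
  have "cmod (a n * b n) \<le> (M1 * M2) * (1 + real_of_int (norm1 n)) ^ (k1 + k2)" for n
  proof -
    let ?x = "1 + real_of_int (norm1 n)"
    have "cmod (a n * b n) = cmod (a n) * cmod (b n)" by (simp add: norm_mult)
    also have "\<dots> \<le> (M1 * ?x ^ k1) * (M2 * ?x ^ k2)"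
      using b1 b2 M1 base_ge1[of n] by (intro mult_mono) auto
    finally show ?thesis by (simp add: power_add algebra_simps)
  qed
  thus ?thesis unfolding slow_growth_def using M1 M2
    by (intro CollectI exI[of _ "M1*M2"]) auto
qed

lemma uminus_in:
  assumes "a \<in> slow_growth" shows "(\<lambda>n. - a n) \<in> slow_growth"
  using assms unfolding slow_growth_def by simp

instantiation sprime :: (finite) comm_ring_1
begin
lift_definition zero_sprime :: "'a sprime" is "\<lambda>_. 0" by (rule const_in)
lift_definition one_sprime :: "'a sprime" is "\<lambda>_. 1" by (rule const_in)
lift_definition plus_sprime :: "'a sprime \<Rightarrow> 'a sprime \<Rightarrow> 'a sprime" is "\<lambda>a b n. a n + b n"
  by (rule add_in)
lift_definition times_sprime :: "'a sprime \<Rightarrow> 'a sprime \<Rightarrow> 'a sprime" is "\<lambda>a b n. a n * b n"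
  by (rule mult_in)
lift_definition uminus_sprime :: "'a sprime \<Rightarrow> 'a sprime" is "\<lambda>a n. - a n"
  by (rule uminus_in)
lift_definition minus_sprime :: "'a sprime \<Rightarrow> 'a sprime \<Rightarrow> 'a sprime" is "\<lambda>a b n. a n - b n"
proof -
  fix a b :: "('a \<Rightarrow> int) \<Rightarrow> complex"
  assume "a \<in> slow_growth" "b \<in> slow_growth"
  then have "(\<lambda>n. a n + (- b n)) \<in> slow_growth" by (intro add_in uminus_in)
  thus "(\<lambda>n. a n - b n) \<in> slow_growth" by simp
qed
instance
  by standard (transfer; auto simp: algebra_simps fun_eq_iff)+
end

end

theory Submission imports Defs begin

text \<open>
  Evaluated at a point \<open>n\<close>, the identity \<open>b \<cdot> a = 1\<close> forces some \<open>|a\<^sub>i(n)|\<close> to be at least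
  \<open>1 / B(n)\<close>, where \<open>B = 1 + \<Sum>|b\<^sub>i|\<close> grows polynomially. Put \<open>c\<^sub>0 = 1\<close> and
  \<open>c\<^sub>i = \<omega> conj(a\<^sub>i)\<close> for \<open>i \<ge> 1\<close>, with \<open>\<omega>\<close> the phase of \<open>a\<^sub>0\<close>. Then
  \<open>c \<cdot> a = \<omega> (|a\<^sub>0| + \<Sum>\<^sub>i\<^sub>\<ge>\<^sub>1 |a\<^sub>i|\<^sup>2)\<close> involves no cancellation, so \<open>|c \<cdot> a| \<ge> 1 / B\<^sup>2\<close>
  and \<open>c \<cdot> a\<close> is a unit of \<open>s'(\<int>\<^sup>d)\<close>. Over any commutative ring, such a \<open>c\<close> completes
  \<open>a\<close> to the invertible matrix \<open>I + (a - e\<^sub>0) c\<^sup>T\<close>: its first column is \<open>a\<close> since \<open>c\<^sub>0 = 1\<close>,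
  and by Sherman--Morrison it is invertible because \<open>1 + c\<^sup>T (a - e\<^sub>0) = c \<cdot> a\<close> is a unit.
\<close>

definition rank_one_update :: "nat \<Rightarrow> 'a::comm_ring_1 \<Rightarrow> 'a vec \<Rightarrow> 'a vec \<Rightarrow> 'a mat" where
  "rank_one_update N \<alpha> u c = mat N N (\<lambda>(i, j). (if i = j then 1 else 0) + \<alpha> * u $ i * c $ j)"

lemma rank_one_update_zero: "rank_one_update N 0 u c = 1\<^sub>m N"
  by (rule eq_matI) (auto simp: rank_one_update_def)

lemma rank_one_update_mult:
  "rank_one_update N \<alpha> u c * rank_one_update N \<beta> u c
   = rank_one_update N (\<alpha> + \<beta> + \<alpha> * \<beta> * (\<Sum>k<N. c $ k * u $ k)) u c"
proof (rule eq_matI)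
  fix i j assume "i < dim_row (rank_one_update N (\<alpha> + \<beta> + \<alpha> * \<beta> * (\<Sum>k<N. c $ k * u $ k)) u c)"
    and "j < dim_col (rank_one_update N (\<alpha> + \<beta> + \<alpha> * \<beta> * (\<Sum>k<N. c $ k * u $ k)) u c)"
  then have i: "i < N" and j: "j < N" by (auto simp: rank_one_update_def)
  let ?\<delta> = "\<lambda>i j. if i = j then 1 else (0::'a)"
  have "(rank_one_update N \<alpha> u c * rank_one_update N \<beta> u c) $$ (i, j)
      = (\<Sum>k<N. (?\<delta> i k + \<alpha> * u $ i * c $ k) * (?\<delta> k j + \<beta> * u $ k * c $ j))"
    using i j by (auto simp: rank_one_update_def scalar_prod_def lessThan_atLeast0 intro!: sum.cong)
  also have "\<dots> = (\<Sum>k<N. (if i = k then ?\<delta> k j else 0) + (if i = k then \<beta> * u $ k * c $ j else 0)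
      + (if k = j then \<alpha> * u $ i * c $ k else 0) + \<alpha> * \<beta> * u $ i * c $ j * (c $ k * u $ k))"
    by (rule sum.cong) (auto simp: algebra_simps)
  also have "\<dots> = ?\<delta> i j + (\<alpha> + \<beta> + \<alpha> * \<beta> * (\<Sum>k<N. c $ k * u $ k)) * u $ i * c $ j"
    using i j by (simp add: sum.distrib sum_distrib_left sum.delta sum.delta' algebra_simps)
  finally show "(rank_one_update N \<alpha> u c * rank_one_update N \<beta> u c) $$ (i, j)
      = rank_one_update N (\<alpha> + \<beta> + \<alpha> * \<beta> * (\<Sum>k<N. c $ k * u $ k)) u c $$ (i, j)"
    using i j by (simp add: rank_one_update_def)
qed (auto simp: rank_one_update_def)

lemma invertible_rank_one_update:
  assumes "x * (1 + (\<Sum>k<N. c $ k * u $ k)) = 1"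
  shows "invertible_mat (rank_one_update N 1 u c)"
proof -
  let ?t = "\<Sum>k<N. c $ k * u $ k"
  have "1 + - x + 1 * - x * ?t = 0" and "- x + 1 + - x * 1 * ?t = 0"
    using assms by (simp_all add: algebra_simps)
  then have "rank_one_update N 1 u c * rank_one_update N (- x) u c = 1\<^sub>m N"
    and "rank_one_update N (- x) u c * rank_one_update N 1 u c = 1\<^sub>m N"
    by (simp_all only: rank_one_update_mult rank_one_update_zero)
  then show ?thesis
    unfolding invertible_mat_def inverts_mat_def
    by (auto simp: rank_one_update_def square_mat.simps)
qed

lemma first_column_completion:
  fixes a c :: "'a::comm_ring_1 vec"
  assumes a: "a \<in> carrier_vec N" and N: "0 < N" and c0: "c $ 0 = 1"
    and x: "x * (\<Sum>k<N. c $ k * a $ k) = 1"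
  shows "\<exists>A \<in> carrier_mat N N. invertible_mat A \<and> col A 0 = a"
proof (intro bexI conjI)
  let ?u = "a - unit_vec N 0"
  have "(\<Sum>k<N. c $ k * a $ k) = (\<Sum>k<N. c $ k * ?u $ k + (if k = 0 then c $ k else 0))"
    using a by (intro sum.cong) (auto simp: algebra_simps)
  also have "\<dots> = 1 + (\<Sum>k<N. c $ k * ?u $ k)"
    using N c0 by (simp add: sum.distrib sum.delta')
  finally show "invertible_mat (rank_one_update N 1 ?u c)"
    using x by (intro invertible_rank_one_update) simp
  show "col (rank_one_update N 1 ?u c) 0 = a"
    using a N c0 by (auto simp: rank_one_update_def)
qed (simp add: rank_one_update_def)

lemma exists_large_component:
  fixes F G :: "nat \<Rightarrow> complex"
  assumes "(\<Sum>i<N. G i * F i) = 1"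
  shows "\<exists>i<N. 1 / (1 + (\<Sum>i<N. cmod (G i))) \<le> cmod (F i)"
proof (rule ccontr)
  define B where "B = 1 + (\<Sum>i<N. cmod (G i))"
  have B: "0 < B" unfolding B_def by (simp add: add_pos_nonneg sum_nonneg)
  assume "\<not> (\<exists>i<N. 1 / (1 + (\<Sum>i<N. cmod (G i))) \<le> cmod (F i))"
  then have small: "cmod (F i) \<le> 1 / B" if "i < N" for i
    using that by (auto simp: B_def)
  have "1 = cmod (\<Sum>i<N. G i * F i)" using assms by simp
  also have "\<dots> \<le> (\<Sum>i<N. cmod (G i) * cmod (F i))"
    by (rule order_trans[OF norm_sum]) (simp add: norm_mult)
  also have "\<dots> \<le> (\<Sum>i<N. cmod (G i) * (1 / B))"
    by (intro sum_mono mult_left_mono small) auto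
  also have "\<dots> = (B - 1) / B" unfolding B_def by (simp add: sum_divide_distrib)
  also have "\<dots> < 1" using B by (simp add: divide_less_eq)
  finally show False by simp
qed

definition aligned_conj :: "(nat \<Rightarrow> complex) \<Rightarrow> nat \<Rightarrow> complex" where
  "aligned_conj F i = (if i = 0 then 1 else (if F 0 = 0 then 1 else sgn (F 0)) * cnj (F i))"

lemma norm_aligned_conj: "i \<noteq> 0 \<Longrightarrow> cmod (aligned_conj F i) = cmod (F i)"
  by (simp add: aligned_conj_def norm_mult norm_sgn)

lemma norm_aligned_conj_pairing:
  assumes "0 < N"
  shows "cmod (\<Sum>i<N. aligned_conj F i * F i) = cmod (F 0) + (\<Sum>i\<in>{1..<N}. (cmod (F i))\<^sup>2)"
proof -
  define w where "w = (if F 0 = 0 then 1 else sgn (F 0))"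
  define R where "R = cmod (F 0) + (\<Sum>i\<in>{1..<N}. (cmod (F i))\<^sup>2)"
  have R: "0 \<le> R" unfolding R_def by (simp add: sum_nonneg)
  have F0: "F 0 = w * of_real (cmod (F 0))"
    by (cases "F 0 = 0") (simp_all add: w_def sgn_eq)
  have "{..<N} = insert 0 {1..<N}" using assms by auto
  then have "(\<Sum>i<N. aligned_conj F i * F i) = F 0 + (\<Sum>i\<in>{1..<N}. w * (F i * cnj (F i)))"
    by (simp add: aligned_conj_def w_def mult_ac)
  also have "\<dots> = F 0 + (\<Sum>i\<in>{1..<N}. w * of_real ((cmod (F i))\<^sup>2))"
    by (simp only: complex_norm_square)
  also have "\<dots> = w * of_real R"
    unfolding R_def by (subst F0) (simp add: sum_distrib_left[symmetric] distrib_left)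
  finally have "cmod (\<Sum>i<N. aligned_conj F i * F i) = cmod w * \<bar>R\<bar>"
    by (simp only: norm_mult norm_of_real)
  moreover have "cmod w = 1" by (simp add: w_def norm_sgn)
  ultimately show ?thesis using R by (simp add: R_def)
qed

lemma aligned_conj_pairing_lower_bound:
  fixes F G :: "nat \<Rightarrow> complex"
  assumes "(\<Sum>i<N. G i * F i) = 1"
  shows "1 / (1 + (\<Sum>i<N. cmod (G i)))\<^sup>2 \<le> cmod (\<Sum>i<N. aligned_conj F i * F i)"
proof -
  define B where "B = 1 + (\<Sum>i<N. cmod (G i))"
  have B: "1 \<le> B" unfolding B_def by (simp add: sum_nonneg)
  obtain i where i: "i < N" and large: "1 / B \<le> cmod (F i)"
    using exists_large_component[OF assms] by (auto simp: B_def)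
  have "1 / B\<^sup>2 \<le> cmod (F 0) + (\<Sum>i\<in>{1..<N}. (cmod (F i))\<^sup>2)"
  proof (cases "i = 0")
    case True
    have "1 / B\<^sup>2 \<le> 1 / B" using B by (simp add: divide_simps power2_eq_square)
    moreover have "0 \<le> (\<Sum>i\<in>{1..<N}. (cmod (F i))\<^sup>2)" by (simp add: sum_nonneg)
    ultimately show ?thesis using large[unfolded True] by linarith
  next
    case False
    have "1 / B\<^sup>2 \<le> (cmod (F i))\<^sup>2"
      using large B by (metis power_mono power_one_over zero_le_divide_1_iff zero_le_one order_trans)
    also have "\<dots> \<le> (\<Sum>i\<in>{1..<N}. (cmod (F i))\<^sup>2)"
      using False i by (intro member_le_sum) auto
    finally show ?thesis using norm_ge_zero[of "F 0"] by linarith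
  qed
  with i show ?thesis by (simp add: norm_aligned_conj_pairing B_def)
qed

lemma sp_fun_add: "sp_fun (x + y) n = sp_fun x n + sp_fun y n"
  by transfer simp

lemma sp_fun_mult: "sp_fun (x * y) n = sp_fun x n * sp_fun y n"
  by transfer simp

lemma sp_fun_1: "sp_fun 1 n = 1"
  by transfer simp

lemma sp_fun_0: "sp_fun 0 n = 0"
  by transfer simp

lemma sp_fun_sum: "sp_fun (\<Sum>i\<in>A. f i) n = (\<Sum>i\<in>A. sp_fun (f i) n)"
  by (induction A rule: infinite_finite_induct) (auto simp: sp_fun_0 sp_fun_add)

lemma zero_neq_one_sprime: "(0 :: 'd::finite sprime) \<noteq> 1"
  by (metis sp_fun_0 sp_fun_1 zero_neq_one)

lemma slow_growth_dominated:
  assumes "f \<in> slow_growth" and "\<And>n. cmod (g n) \<le> cmod (f n)"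
  shows "g \<in> slow_growth"
  using assms unfolding slow_growth_def by (blast intro: order_trans)

lemma slow_growth_sum:
  assumes "\<And>i. i \<in> A \<Longrightarrow> f i \<in> slow_growth"
  shows "(\<lambda>n. \<Sum>i\<in>A. f i n) \<in> slow_growth"
  using assms
  by (induction A rule: infinite_finite_induct) (simp_all add: const_in[of 0, simplified] add_in)

lemma slow_growth_one_plus_norm_sum:
  assumes "\<And>i. i \<in> A \<Longrightarrow> f i \<in> slow_growth"
  shows "(\<lambda>n. complex_of_real (1 + (\<Sum>i\<in>A. cmod (f i n)))) \<in> slow_growth"
proof -
  have "(\<lambda>n. complex_of_real (cmod (f i n))) \<in> slow_growth" if "i \<in> A" for i
    by (rule slow_growth_dominated[OF assms[OF that]]) simp
  then have "(\<lambda>n. 1 + (\<Sum>i\<in>A. complex_of_real (cmod (f i n)))) \<in> slow_growth"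
    by (intro add_in const_in slow_growth_sum)
  then show ?thesis by simp
qed

lemma slow_growth_aligned_conj:
  assumes "\<And>i. f i \<in> slow_growth"
  shows "(\<lambda>n. aligned_conj (\<lambda>i. f i n) k) \<in> slow_growth"
proof (cases "k = 0")
  case True
  then show ?thesis using const_in[of 1] by (simp add: aligned_conj_def)
next
  case False
  then show ?thesis
    by (intro slow_growth_dominated[OF assms[of k]]) (simp add: norm_aligned_conj)
qed

lemma sprime_unit_if_bounded_below:
  assumes g: "g \<in> slow_growth" and bound: "\<And>n. 1 \<le> cmod (g n) * cmod (sp_fun s n)"
  shows "\<exists>x. x * s = 1"
proof
  have nonzero: "sp_fun s n \<noteq> 0" for n
    using bound[of n] by auto
  have "(\<lambda>n. 1 / sp_fun s n) \<in> slow_growth"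
  proof (rule slow_growth_dominated[OF g])
    show "cmod (1 / sp_fun s n) \<le> cmod (g n)" for n
      using bound[of n] nonzero[of n] by (simp add: norm_divide divide_simps)
  qed
  then show "Abs_sprime (\<lambda>n. 1 / sp_fun s n) * s = 1"
    using nonzero by (simp add: sp_fun_inject[symmetric] fun_eq_iff sp_fun_mult sp_fun_1
        Abs_sprime_inverse)
qed

lemma sprime_aligned_pairing_unit:
  fixes a b :: "'d::finite sprime vec"
  assumes N: "0 < N" and ba: "(\<Sum>i<N. b $ i * a $ i) = 1"
  obtains c x where "c $ 0 = 1" and "x * (\<Sum>k<N. c $ k * a $ k) = 1"
proof -
  define F where "F n = (\<lambda>i. sp_fun (a $ i) n)" for n
  define B where "B n = 1 + (\<Sum>i<N. cmod (sp_fun (b $ i) n))" for n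
  define c where "c = vec N (\<lambda>i. Abs_sprime (\<lambda>n. aligned_conj (F n) i))"
  have sp_fun_c: "sp_fun (c $ i) n = aligned_conj (F n) i" if "i < N" for i n
    using that by (simp add: c_def F_def Abs_sprime_inverse slow_growth_aligned_conj sp_fun)
  have "c $ 0 = 1"
    using N by (simp add: sp_fun_inject[symmetric] fun_eq_iff sp_fun_c sp_fun_1 aligned_conj_def)
  moreover have "\<exists>x. x * (\<Sum>k<N. c $ k * a $ k) = 1"
  proof (rule sprime_unit_if_bounded_below)
    show "(\<lambda>n. complex_of_real (B n) * complex_of_real (B n)) \<in> slow_growth"
      unfolding B_def using sp_fun by (intro mult_in slow_growth_one_plus_norm_sum)
    fix n
    have "(\<Sum>i<N. sp_fun (b $ i) n * F n i) = 1"
      using arg_cong[OF ba, of "\<lambda>x. sp_fun x n"] by (simp add: sp_fun_sum sp_fun_mult sp_fun_1 F_def)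
    then have "1 / (B n)\<^sup>2 \<le> cmod (\<Sum>i<N. aligned_conj (F n) i * F n i)"
      unfolding B_def by (rule aligned_conj_pairing_lower_bound)
    moreover have "1 \<le> B n" unfolding B_def by (simp add: sum_nonneg)
    ultimately show "1 \<le> cmod (complex_of_real (B n) * complex_of_real (B n))
        * cmod (sp_fun (\<Sum>k<N. c $ k * a $ k) n)"
      by (simp add: sp_fun_sum sp_fun_mult sp_fun_c F_def norm_mult divide_simps power2_eq_square mult_ac)
  qed
  ultimately show ?thesis using that by blast
qed

theorem corollary1p6:
  shows "hermite_ring TYPE('d::finite sprime)"
  unfolding hermite_ring_def
proof (intro allI impI)
  fix N and a :: "'d sprime vec"
  assume "unimodular N a"
  then obtain b where a: "a \<in> carrier_vec N" and ba: "(\<Sum>i<N. b $ i * a $ i) = 1"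
    unfolding unimodular_def by blast
  have N: "0 < N"
    using ba zero_neq_one_sprime by (cases N) auto
  obtain c x where "c $ 0 = 1" and "x * (\<Sum>k<N. c $ k * a $ k) = 1"
    using sprime_aligned_pairing_unit[OF N ba] .
  then show "\<exists>A \<in> carrier_mat N N. invertible_mat A \<and> col A 0 = a"
    using first_column_completion[OF a N] by blast
qed

end
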